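(* Let $D$ be a square-free integer, let $\mathbb{Z}[\sqrt{D}]$ denote the ring of integers of $\mathbb{Q}(\sqrt{D})$, let $p$ be a prime integer which is irreducible but not prime in $\mathbb{Z}[\sqrt{D}]$, let $z\in I_p(D)$ and put $k=\lVert z\rVert/p$. For any $a,b,c,d,e,f\in\mathbb{Z}[\sqrt{D}]$, we have that $A(p,z)=BC$ where $B=\begin{pmatrix} a&b\\ c&1-a\end{pmatrix}$ and $C=\begin{pmatrix} d&e\\ f&1-d\end{pmatrix}$ are idempotent matrices if and only if $$p=ad+bf,\quad z(1-a)=kb,\quad \bar z a=pc,\quad zd=pe,\quad \bar z(1-d)=kf.$$
   Context: $\mathbb{Z}[\sqrt{D}]=\{a+b\sqrt{D}:a,b\in\mathbb{Z}\}$ if $D\equiv 2,3 \pmod 4$ and $\{\frac{a+b\sqrt{D}}{2}:a,b\in\mathbb{Z},a\equiv b \pmod 2\}$ if $D\equiv 1\pmod 4$. $\bar z$ denotes the conjugate and $\lVert z\rVert=z\bar z$ the norm. $I_p(D)$ is the set of all non-unit $z\in\mathbb{Z}[\sqrt{D}]$ such that $z\notin\langle p\rangle$ but there exists $m\notin\langle p\rangle$ with $zm\in\langle p\rangle$ (for such $z$, $p$ divides $\lVert z\rVert$). $A(p,z)=\begin{pmatrix} p & z\\ \bar z & \lVert z\rVert/p\end{pmatrix}$. A matrix $M$ is idempotent if $M^2=M$. *)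

theory Defs
  imports "HOL-Analysis.Analysis" "HOL-Computational_Algebra.Squarefree"
begin

text \<open>We realise Q(sqrt D) inside the complex numbers, with a fixed square root of D.\<close>

definition sqrtD :: "int \<Rightarrow> complex" where
  "sqrtD D = (if D \<ge> 0 then complex_of_real (sqrt (real_of_int D))
              else \<i> * complex_of_real (sqrt (real_of_int (- D))))"

definition ZD :: "int \<Rightarrow> complex set" where
  "ZD D = (if D mod 4 = 1
           then {(of_int a + of_int b * sqrtD D) / 2 | a b :: int. a mod 2 = b mod 2}
           else {of_int a + of_int b * sqrtD D | a b :: int. True})"

definition qconj :: "int \<Rightarrow> complex \<Rightarrow> complex" where
  "qconj D z = (THE w. \<exists>x y :: rat. z = of_rat x + of_rat y * sqrtD D
                                   \<and> w = of_rat x - of_rat y * sqrtD D)"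

definition qnorm :: "int \<Rightarrow> complex \<Rightarrow> complex" where
  "qnorm D z = z * qconj D z"

definition ZD_dvd :: "int \<Rightarrow> complex \<Rightarrow> complex \<Rightarrow> bool" where
  "ZD_dvd D x y \<longleftrightarrow> (\<exists>w \<in> ZD D. y = x * w)"

definition ZD_unit :: "int \<Rightarrow> complex \<Rightarrow> bool" where
  "ZD_unit D u \<longleftrightarrow> u \<in> ZD D \<and> (\<exists>w \<in> ZD D. u * w = 1)"

definition ZD_ideal :: "int \<Rightarrow> complex \<Rightarrow> complex set" where
  "ZD_ideal D x = {x * w | w. w \<in> ZD D}"

definition ZD_irreducible :: "int \<Rightarrow> complex \<Rightarrow> bool" where
  "ZD_irreducible D p \<longleftrightarrow> p \<in> ZD D \<and> p \<noteq> 0 \<and> \<not> ZD_unit D p \<and>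
     (\<forall>x \<in> ZD D. \<forall>y \<in> ZD D. p = x * y \<longrightarrow> ZD_unit D x \<or> ZD_unit D y)"

definition ZD_prime :: "int \<Rightarrow> complex \<Rightarrow> bool" where
  "ZD_prime D p \<longleftrightarrow> p \<in> ZD D \<and> p \<noteq> 0 \<and> \<not> ZD_unit D p \<and>
     (\<forall>x \<in> ZD D. \<forall>y \<in> ZD D. ZD_dvd D p (x * y) \<longrightarrow> ZD_dvd D p x \<or> ZD_dvd D p y)"

definition Ip :: "int \<Rightarrow> int \<Rightarrow> complex set" where
  "Ip p D = {z \<in> ZD D. \<not> ZD_unit D z \<and> z \<notin> ZD_ideal D (of_int p) \<and>
     (\<exists>m \<in> ZD D. m \<notin> ZD_ideal D (of_int p) \<and> z * m \<in> ZD_ideal D (of_int p))}"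

definition mat2 :: "'a::zero \<Rightarrow> 'a \<Rightarrow> 'a \<Rightarrow> 'a \<Rightarrow> 'a ^ 2 ^ 2" where
  "mat2 a b c d = (\<chi> i j. if i = 1 then (if j = 1 then a else b) else (if j = 1 then c else d))"

definition idempotent_mat :: "'a::semiring_1 ^ 2 ^ 2 \<Rightarrow> bool" where
  "idempotent_mat M \<longleftrightarrow> M ** M = M"

definition Amat :: "int \<Rightarrow> int \<Rightarrow> complex \<Rightarrow> complex ^ 2 ^ 2" where
  "Amat D p z = mat2 (of_int p) z (qconj D z) (qnorm D z / of_int p)"

end

theory Submission
  imports Defs
begin

(* If B and C are idempotent and A = B C, then B A = A = A C; the off-diagonal entries of these
   two identities are the last four equations, and the (1,1) entry of A = B C is the first.
   Conversely, as N(z) = p k with p and k nonzero, the last four equations express b, c, e, f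
   through a and d, and the first one becomes p k = a d k + p (1 - a) (1 - d); given this relation,
   the remaining entries of B C and the idempotency conditions b c = a (1 - a), e f = d (1 - d)
   are identities of rational functions. *)

lemma mat2_mult:
  "mat2 a b c d ** mat2 a' b' c' d' =
     mat2 (a*a' + b*c') (a*b' + b*d') (c*a' + d*c') (c*b' + d*d' :: 'a::semiring_1)"
  unfolding mat2_def matrix_matrix_mult_def by (simp add: vec_eq_iff forall_2 sum_2)

lemma mat2_eq_iff:
  "mat2 a b c d = mat2 a' b' c' d' \<longleftrightarrow> a = a' \<and> b = b' \<and> c = c' \<and> (d::'a::zero) = d'"
  unfolding mat2_def by (simp add: vec_eq_iff forall_2)

lemma idempotent_mat2_trace_one_iff:
  "idempotent_mat (mat2 a b c (1 - a)) \<longleftrightarrow> b * c = a * (1 - a :: 'a::comm_ring_1)"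
  unfolding idempotent_mat_def mat2_mult mat2_eq_iff by (auto simp: algebra_simps)

lemma idempotent_factors_absorb:
  fixes B C :: "'a::semiring_1 ^ 2 ^ 2"
  assumes "idempotent_mat B" "idempotent_mat C"
  shows "B ** (B ** C) = B ** C" "(B ** C) ** C = B ** C"
  using assms unfolding idempotent_mat_def by (metis matrix_mul_assoc)+

lemma mat2_idempotent_factorization_imp_eqs:
  fixes a b c d e f P z w k :: "'a::comm_ring_1"
  assumes A: "mat2 P z w k = mat2 a b c (1 - a) ** mat2 d e f (1 - d)"
    and "idempotent_mat (mat2 a b c (1 - a))" "idempotent_mat (mat2 d e f (1 - d))"
  shows "P = a*d + b*f \<and> z*(1 - a) = k*b \<and> w*a = P*c \<and> z*d = P*e \<and> w*(1 - d) = k*f"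
proof -
  have "mat2 a b c (1 - a) ** mat2 P z w k = mat2 P z w k"
    and "mat2 P z w k ** mat2 d e f (1 - d) = mat2 P z w k"
    unfolding A by (fact idempotent_factors_absorb[OF assms(2,3)])+
  moreover have "P = a*d + b*f" using A by (simp add: mat2_mult mat2_eq_iff)
  ultimately show ?thesis by (simp add: mat2_mult mat2_eq_iff algebra_simps)
qed

lemma eqs_imp_mat2_idempotent_factorization:
  fixes a b c d e f P z w k :: "'a::field"
  assumes "P \<noteq> 0" "k \<noteq> 0" "z * w = P * k"
    and P: "P = a*d + b*f" and eq_b: "z*(1 - a) = k*b" and eq_c: "w*a = P*c"
    and eq_e: "z*d = P*e" and eq_f: "w*(1 - d) = k*f"
  shows "mat2 P z w k = mat2 a b c (1 - a) ** mat2 d e f (1 - d)"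
    and "idempotent_mat (mat2 a b c (1 - a))" and "idempotent_mat (mat2 d e f (1 - d))"
proof -
  have z: "z \<noteq> 0" using assms(1-3) by auto
  then have w: "w = P * k / z" using assms(3) by (simp add: field_simps)
  have b: "b = z * (1 - a) / k" using eq_b assms(2) by (simp add: field_simps)
  have e: "e = z * d / P" using eq_e assms(1) by (simp add: field_simps)
  have "P * (k * a) = P * (c * z)" and "k * (P * (1 - d)) = k * (f * z)"
    using eq_c eq_f z unfolding w by (simp_all add: field_simps)
  then have "k * a = c * z" and "P * (1 - d) = f * z"
    using assms(1,2) by simp_all
  then have c: "c = k * a / z" and f: "f = P * (1 - d) / z"
    using z by (simp_all add: field_simps)
  have "P = a * d + P * (1 - a) * (1 - d) / k"
    using P z unfolding b f by (simp add: mult_ac)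
  then have K: "P * k = a * d * k + P * (1 - a) * (1 - d)"
    using assms(2) by (simp add: field_simps)
  show "idempotent_mat (mat2 a b c (1 - a))" "idempotent_mat (mat2 d e f (1 - d))"
    using assms(1,2) z unfolding idempotent_mat2_trace_one_iff b c e f by (simp_all add: field_simps)
  have "a*e + b*(1 - d) = z * (a * d * k + P * (1 - a) * (1 - d)) / (P * k)"
    using assms(1,2) unfolding b e by (simp add: field_simps)
  also have "\<dots> = z" using assms(1,2) by (simp flip: K)
  finally have entry12: "a*e + b*(1 - d) = z" .
  have "c*d + (1 - a)*f = w * (a * d * k + P * (1 - a) * (1 - d)) / (P * k)"
    using assms(1,2) z unfolding w c f by (simp add: field_simps)
  also have "\<dots> = w" using assms(1,2) by (simp flip: K)
  finally have entry21: "c*d + (1 - a)*f = w" .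
  have "c*e + (1 - a)*(1 - d) = (a * d * k + P * (1 - a) * (1 - d)) / P"
    using assms(1,2) z unfolding c e by (simp add: field_simps)
  also have "\<dots> = k" using assms(1,2) by (simp flip: K)
  finally have entry22: "c*e + (1 - a)*(1 - d) = k" .
  show "mat2 P z w k = mat2 a b c (1 - a) ** mat2 d e f (1 - d)"
    using P entry12 entry21 entry22 by (simp add: mat2_mult mat2_eq_iff)
qed

lemma mat2_idempotent_factorization_iff:
  fixes a b c d e f P z w k :: "'a::field"
  assumes "P \<noteq> 0" "k \<noteq> 0" "z * w = P * k"
  shows "(mat2 P z w k = mat2 a b c (1 - a) ** mat2 d e f (1 - d)
           \<and> idempotent_mat (mat2 a b c (1 - a)) \<and> idempotent_mat (mat2 d e f (1 - d)))
         \<longleftrightarrow> (P = a*d + b*f \<and> z*(1 - a) = k*b \<and> w*a = P*c \<and> z*d = P*e \<and> w*(1 - d) = k*f)"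
  using mat2_idempotent_factorization_imp_eqs eqs_imp_mat2_idempotent_factorization[OF assms] by metis

lemma of_rat_complex_eq_of_real: "(of_rat q :: complex) = of_real (of_rat q)"
  by (cases q) (simp add: of_rat_rat)

lemma Rats_sqrt_of_int_imp_square:
  fixes D :: int
  assumes "D \<ge> 0" "sqrt (real_of_int D) \<in> \<rat>"
  shows "\<exists>m::nat. D = int m ^ 2"
proof -
  obtain m n :: nat where n: "n \<noteq> 0" and sq: "\<bar>sqrt (real_of_int D)\<bar> = m / n" and cop: "coprime m n"
    using assms(2) by (rule Rats_abs_nat_div_natE)
  have "real m = sqrt (real_of_int D) * n" using n sq assms(1) by (simp add: field_simps)
  then have "(real m)^2 = real_of_int D * (real n)^2" using assms(1) by (simp add: power_mult_distrib)
  then have eq: "int m ^ 2 = D * int n ^ 2"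
    by (metis of_int_eq_iff of_int_mult of_int_of_nat_eq of_int_power)
  then have "n ^ 2 dvd m ^ 2" by (metis dvd_triv_right of_nat_dvd_iff of_nat_power)
  then have "n dvd m" by simp
  with cop have "n = 1" by (simp add: coprime_absorb_right)
  with eq show ?thesis by auto
qed

lemma sqrtD_neq_of_rat:
  assumes "squarefree D" "D \<noteq> 1"
  shows "sqrtD D \<noteq> of_rat q"
proof
  assume h: "sqrtD D = of_rat q"
  consider "D < 0" | "D = 0" | "D > 1" using assms(2) by linarith
  then show False
  proof cases
    case 1
    then have "Im (sqrtD D) > 0" by (simp add: sqrtD_def)
    with h show False by (simp add: of_rat_complex_eq_of_real)
  next
    case 2
    then show False using assms(1) by simp
  next
    case 3
    then have "sqrt (real_of_int D) = of_rat q"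
      using h by (simp add: sqrtD_def of_rat_complex_eq_of_real)
    then obtain m :: nat where m: "D = int m ^ 2"
      using 3 Rats_sqrt_of_int_imp_square by fastforce
    then have "int m dvd 1" using squarefreeD[OF assms(1), of "int m"] by simp
    with m 3 show False by simp
  qed
qed

lemma rat_coords_unique:
  assumes "squarefree D" "D \<noteq> 1"
    and "(of_rat x :: complex) + of_rat y * sqrtD D = of_rat x' + of_rat y' * sqrtD D"
  shows "x = x' \<and> y = y'"
proof -
  have "y = y'"
  proof (rule ccontr)
    assume "y \<noteq> y'"
    then have "sqrtD D = of_rat ((x' - x) / (y - y'))"
      using assms(3) by (simp add: of_rat_diff of_rat_divide field_simps)
    then show False using sqrtD_neq_of_rat[OF assms(1,2)] by blast
  qed
  then show ?thesis using assms(3) by simp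
qed

lemma qconj_rat_coords:
  assumes "squarefree D" "D \<noteq> 1"
  shows "qconj D (of_rat x + of_rat y * sqrtD D) = of_rat x - of_rat y * sqrtD D"
  unfolding qconj_def
proof (rule the_equality)
  fix w
  assume "\<exists>x' y'. of_rat x + of_rat y * sqrtD D = of_rat x' + of_rat y' * sqrtD D
                   \<and> w = of_rat x' - of_rat y' * sqrtD D"
  then show "w = of_rat x - of_rat y * sqrtD D"
    using rat_coords_unique[OF assms] by metis
qed blast

lemma ZD_rat_coords:
  assumes "z \<in> ZD D"
  obtains x y where "z = of_rat x + of_rat y * sqrtD D"
proof (cases "D mod 4 = 1")
  case True
  then obtain a b :: int where "z = (of_int a + of_int b * sqrtD D) / 2"
    using assms by (auto simp: ZD_def)
  then have "z = of_rat (of_int a / 2) + of_rat (of_int b / 2) * sqrtD D"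
    by (simp add: of_rat_divide add_divide_distrib)
  then show ?thesis by (rule that)
next
  case False
  then obtain a b :: int where "z = of_int a + of_int b * sqrtD D"
    using assms by (auto simp: ZD_def)
  then have "z = of_rat (of_int a) + of_rat (of_int b) * sqrtD D" by simp
  then show ?thesis by (rule that)
qed

lemma qconj_nonzero:
  assumes "squarefree D" "D \<noteq> 1" "z \<in> ZD D" "z \<noteq> 0"
  shows "qconj D z \<noteq> 0"
proof
  obtain x y where z: "z = of_rat x + of_rat y * sqrtD D"
    using assms(3) by (rule ZD_rat_coords)
  assume "qconj D z = 0"
  then have "of_rat x + of_rat (- y) * sqrtD D = (of_rat 0 :: complex) + of_rat 0 * sqrtD D"
    using qconj_rat_coords[OF assms(1,2), of x y] z by (simp add: of_rat_minus)
  then have "x = 0 \<and> - y = 0" by (rule rat_coords_unique[OF assms(1,2)])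
  with z assms(4) show False by simp
qed

lemma zero_in_ZD: "0 \<in> ZD D"
  unfolding ZD_def by (auto intro!: exI[of _ 0])

theorem lemma3p1:
  fixes D p :: int and z a b c d e f :: complex
  assumes "squarefree D" and "D \<noteq> 1"
    and "prime p"
    and "ZD_irreducible D (of_int p)" and "\<not> ZD_prime D (of_int p)"
    and "z \<in> Ip p D"
    and "a \<in> ZD D" "b \<in> ZD D" "c \<in> ZD D" "d \<in> ZD D" "e \<in> ZD D" "f \<in> ZD D"
  shows "(Amat D p z = mat2 a b c (1 - a) ** mat2 d e f (1 - d)
           \<and> idempotent_mat (mat2 a b c (1 - a)) \<and> idempotent_mat (mat2 d e f (1 - d)))
         \<longleftrightarrow>
         (let k = qnorm D z / of_int p in
            of_int p = a * d + b * f \<and> z * (1 - a) = k * b \<and> qconj D z * a = of_int p * c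
            \<and> z * d = of_int p * e \<and> qconj D z * (1 - d) = k * f)"
proof -
  have z_in_ZD: "z \<in> ZD D" and z_not_in: "z \<notin> ZD_ideal D (of_int p)"
    using assms(6) by (auto simp: Ip_def)
  have "z \<noteq> 0"
    using z_not_in zero_in_ZD by (force simp: ZD_ideal_def)
  moreover have "qconj D z \<noteq> 0" by (rule qconj_nonzero[OF assms(1,2) z_in_ZD \<open>z \<noteq> 0\<close>])
  moreover have p0: "(of_int p :: complex) \<noteq> 0" using assms(3) by (simp add: prime_gt_0_int)
  ultimately have "qnorm D z / of_int p \<noteq> 0" by (simp add: qnorm_def)
  with p0 show ?thesis
    unfolding Amat_def Let_def by (intro mat2_idempotent_factorization_iff) (simp_all add: qnorm_def)
qed

end
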